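(* Let $\mathcal{H}$ be a complex Hilbert space, $A\in\mathcal{B}(\mathcal{H})$ positive and $S\in\mathcal{B}_A(\mathcal{H})$. Then $$d\omega_A^2(S)+2\|S\|_A^2\|\Re_A(S)\|_A\ge\max\left\{\omega_A^2\left(S+S^{\sharp_A}S\right),\ \omega_A^2\left(S-S^{\sharp_A}S\right)\right\}.$$
   Context: $\mathcal{B}(\mathcal{H})$ denotes the bounded linear operators on $\mathcal{H}$. For positive $A$, $\langle x,z\rangle_A=\langle Ax,z\rangle$ and $\|z\|_A=\|A^{1/2}z\|$. $\mathcal{B}_A(\mathcal{H})$ is the set of $S\in\mathcal{B}(\mathcal{H})$ for which some $R\in\mathcal{B}(\mathcal{H})$ satisfies $AR=S^*A$; for such $S$, $S^{\sharp_A}=A^{\dagger}S^*A$ with $A^\dagger$ the Moore–Penrose inverse of $A$. $\Re_A(S)=\frac{S+S^{\sharp_A}}{2}$. For operators $T$ bounded with respect to $\|\cdot\|_A$: $\|T\|_A=\sup_{\|z\|_A=1}\|Tz\|_A$, $\omega_A(T)=\sup_{\|z\|_A=1}|\langle Tz,z\rangle_A|$, and $d\omega_A(T)=\sup_{\|z\|_A=1}(|\langle Tz,z\rangle_A|^2+\|Tz\|_A^4)^{1/2}$. *)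

theory Defs
  imports "HOL-Analysis.Analysis"
begin

text \<open>A complex Hilbert space is modelled as a real Hilbert space (type class
  real_inner + complete_space) equipped with an orthogonal complex structure J
  (multiplication by the imaginary unit).\<close>

definition complex_structure :: "('a::real_inner \<Rightarrow> 'a) \<Rightarrow> bool" where
  "complex_structure J \<longleftrightarrow> bounded_linear J \<and> (\<forall>x. J (J x) = - x)
     \<and> (\<forall>x y. J x \<bullet> J y = x \<bullet> y)"

definition cinner :: "('a::real_inner \<Rightarrow> 'a) \<Rightarrow> 'a \<Rightarrow> 'a \<Rightarrow> complex" where
  "cinner J x y = Complex (x \<bullet> y) (x \<bullet> J y)"

definition cbounded :: "('a::real_inner \<Rightarrow> 'a) \<Rightarrow> ('a \<Rightarrow> 'a) \<Rightarrow> bool" where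
  "cbounded J T \<longleftrightarrow> bounded_linear T \<and> (\<forall>x. T (J x) = J (T x))"

definition cadj :: "('a::real_inner \<Rightarrow> 'a) \<Rightarrow> ('a \<Rightarrow> 'a) \<Rightarrow> 'a \<Rightarrow> 'a" where
  "cadj J T = (\<lambda>y. THE z. \<forall>x. cinner J (T x) y = cinner J x z)"

definition cpositive :: "('a::real_inner \<Rightarrow> 'a) \<Rightarrow> ('a \<Rightarrow> 'a) \<Rightarrow> bool" where
  "cpositive J A \<longleftrightarrow> cbounded J A \<and>
     (\<forall>x. Im (cinner J (A x) x) = 0 \<and> Re (cinner J (A x) x) \<ge> 0)"

definition BA :: "('a::real_inner \<Rightarrow> 'a) \<Rightarrow> ('a \<Rightarrow> 'a) \<Rightarrow> ('a \<Rightarrow> 'a) set" where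
  "BA J A = {S. cbounded J S \<and> (\<exists>R. cbounded J R \<and> (\<forall>x. A (R x) = cadj J S (A x)))}"

text \<open>Moore--Penrose inverse of A on its domain R(A) + R(A)^perp:
  A^dagger y is the unique x in N(A)^perp with y - A x orthogonal to R(A)
  (i.e. A x is the orthogonal projection of y onto the closure of R(A)).\<close>
definition mp_inv :: "('a::real_inner \<Rightarrow> 'a) \<Rightarrow> ('a \<Rightarrow> 'a) \<Rightarrow> 'a \<Rightarrow> 'a" where
  "mp_inv J A y = (THE x. (\<forall>z. A z = 0 \<longrightarrow> cinner J x z = 0)
                        \<and> (\<forall>z. cinner J (y - A x) (A z) = 0))"

definition sharpA :: "('a::real_inner \<Rightarrow> 'a) \<Rightarrow> ('a \<Rightarrow> 'a) \<Rightarrow> ('a \<Rightarrow> 'a) \<Rightarrow> 'a \<Rightarrow> 'a" where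
  "sharpA J A S = (\<lambda>z. mp_inv J A (cadj J S (A z)))"

definition ReA :: "('a::real_inner \<Rightarrow> 'a) \<Rightarrow> ('a \<Rightarrow> 'a) \<Rightarrow> ('a \<Rightarrow> 'a) \<Rightarrow> 'a \<Rightarrow> 'a" where
  "ReA J A S = (\<lambda>z. (1/2) *\<^sub>R (S z + sharpA J A S z))"

definition ainner :: "('a::real_inner \<Rightarrow> 'a) \<Rightarrow> ('a \<Rightarrow> 'a) \<Rightarrow> 'a \<Rightarrow> 'a \<Rightarrow> complex" where
  "ainner J A x z = cinner J (A x) z"

definition anorm :: "('a::real_inner \<Rightarrow> 'a) \<Rightarrow> ('a \<Rightarrow> 'a) \<Rightarrow> 'a \<Rightarrow> real" where
  "anorm J A z = sqrt (Re (ainner J A z z))"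

text \<open>Suprema over the A-unit sphere; 0 is inserted so that the (degenerate)
  empty supremum is 0 -- all quantities are nonnegative, so this changes nothing otherwise.\<close>
definition opnormA :: "('a::real_inner \<Rightarrow> 'a) \<Rightarrow> ('a \<Rightarrow> 'a) \<Rightarrow> ('a \<Rightarrow> 'a) \<Rightarrow> real" where
  "opnormA J A T = Sup (insert 0 ((\<lambda>z. anorm J A (T z)) ` {z. anorm J A z = 1}))"

definition omegaA :: "('a::real_inner \<Rightarrow> 'a) \<Rightarrow> ('a \<Rightarrow> 'a) \<Rightarrow> ('a \<Rightarrow> 'a) \<Rightarrow> real" where
  "omegaA J A T = Sup (insert 0 ((\<lambda>z. cmod (ainner J A (T z) z)) ` {z. anorm J A z = 1}))"

definition domegaA :: "('a::real_inner \<Rightarrow> 'a) \<Rightarrow> ('a \<Rightarrow> 'a) \<Rightarrow> ('a \<Rightarrow> 'a) \<Rightarrow> real" where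
  "domegaA J A T = Sup (insert 0 ((\<lambda>z. sqrt ((cmod (ainner J A (T z) z))\<^sup>2 + (anorm J A (T z))^4))
                          ` {z. anorm J A z = 1}))"

end

theory Submission
  imports Defs
begin

text \<open>For an A-unit vector z write <Sz, z>_A = alpha + i beta and b = ||Sz||_A^2.
  Since S# is an A-adjoint of S, <S# S z, z>_A = ||Sz||_A^2 = b is real, hence
  |<(S +- S# S) z, z>_A|^2 = alpha^2 + beta^2 + b^2 +- 2 alpha b.  The first three terms are
  |<Sz, z>_A|^2 + ||Sz||_A^4 <= dw_A(S)^2, while b <= ||S||_A^2 and
  alpha = Re <Re_A(S) z, z>_A gives |alpha| <= ||Re_A(S)||_A.
  The suprema involved are finite because S and S# are A-bounded: each has a bounded
  A-adjoint (the R with AR = S* A agrees with S# up to the kernel of A).  The adjoint S* and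
  the identity A A^+ A = A come from the projection theorem in the underlying real
  Hilbert space.\<close>

section \<open>Projections and adjoints in real Hilbert spaces\<close>

lemma parallelogram_law:
  fixes u v :: "'a::real_inner"
  shows "(norm (u + v))\<^sup>2 + (norm (u - v))\<^sup>2 = 2 * (norm u)\<^sup>2 + 2 * (norm v)\<^sup>2"
  by (simp add: power2_norm_eq_inner inner_add inner_diff inner_commute)

lemma quadratic_nonneg_imp_discrim_le:
  fixes a b c :: real
  assumes nonneg: "\<And>t. 0 \<le> a * t\<^sup>2 + 2 * b * t + c"
  shows "b\<^sup>2 \<le> a * c"
proof (cases "a = 0")
  case True
  have "b = 0"
  proof (rule ccontr)
    assume "b \<noteq> 0"
    then show False using nonneg[of "- (c + 1) / (2 * b)"] True by (simp add: field_simps)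
  qed
  then show ?thesis using True by simp
next
  case False
  have a_pos: "0 < a"
  proof (rule ccontr)
    assume "\<not> 0 < a"
    with False have "a < 0" by simp
    define t where "t = sqrt ((\<bar>c\<bar> + 1) / - a)"
    have "t\<^sup>2 = (\<bar>c\<bar> + 1) / - a"
      unfolding t_def using \<open>a < 0\<close> by (intro real_sqrt_pow2) (simp add: divide_nonneg_neg)
    then have "a * t\<^sup>2 = - (\<bar>c\<bar> + 1)"
      using \<open>a < 0\<close> by simp
    then show False
      using nonneg[of t] nonneg[of "- t"] by simp
  qed
  have "0 \<le> a * (- b / a)\<^sup>2 + 2 * b * (- b / a) + c" by (rule nonneg)
  then have "0 \<le> (a * c - b\<^sup>2) / a"
    using False by (simp add: field_simps power2_eq_square)
  then show ?thesis using a_pos by (simp add: zero_le_divide_iff)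
qed

lemma convex_minimizing_sequence_Cauchy:
  fixes f :: "nat \<Rightarrow> 'a::real_inner"
  assumes "convex M" and f_in: "\<And>n. f n \<in> M" and d_le: "\<And>y. y \<in> M \<Longrightarrow> d \<le> (norm (x - y))\<^sup>2"
    and f_near: "\<And>n. (norm (x - f n))\<^sup>2 < d + inverse (Suc n)"
  shows "Cauchy f"
proof (rule metric_CauchyI)
  have f_close: "(norm (f i - f j))\<^sup>2 \<le> 2 * inverse (Suc i) + 2 * inverse (Suc j)" for i j
  proof -
    have "(1/2) *\<^sub>R f i + (1/2) *\<^sub>R f j \<in> M"
      using convexD[OF \<open>convex M\<close> f_in f_in] by simp
    then have "4 * d \<le> 4 * (norm (x - ((1/2) *\<^sub>R f i + (1/2) *\<^sub>R f j)))\<^sup>2"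
      using d_le by simp
    also have "\<dots> = (norm (2 *\<^sub>R (x - ((1/2) *\<^sub>R f i + (1/2) *\<^sub>R f j))))\<^sup>2"
      by (simp add: power_mult_distrib)
    also have "2 *\<^sub>R (x - ((1/2) *\<^sub>R f i + (1/2) *\<^sub>R f j)) = (x - f i) + (x - f j)"
      by (simp add: algebra_simps scaleR_2)
    finally show ?thesis
      using parallelogram_law[of "x - f i" "x - f j"] f_near[of i] f_near[of j]
      by (simp add: norm_minus_commute)
  qed
  fix e :: real
  assume "0 < e"
  then obtain N where N: "inverse (Suc N) < e\<^sup>2 / 4"
    using reals_Archimedean[of "e\<^sup>2 / 4"] by auto
  have "dist (f m) (f n) < e" if "N \<le> m" "N \<le> n" for m n
  proof -
    have "inverse (Suc m) \<le> inverse (Suc N)" "inverse (Suc n) \<le> inverse (Suc N)"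
      using that by (simp_all add: le_imp_inverse_le)
    then have "(norm (f m - f n))\<^sup>2 < e\<^sup>2" using f_close[of m n] N by linarith
    then show ?thesis using \<open>0 < e\<close> by (simp add: dist_norm power2_less_imp_less)
  qed
  then show "\<exists>M. \<forall>m\<ge>M. \<forall>n\<ge>M. dist (f m) (f n) < e" by blast
qed

lemma closed_convex_nearest_point_exists:
  fixes M :: "'a::{real_inner,complete_space} set"
  assumes "closed M" "convex M" "M \<noteq> {}"
  shows "\<exists>m\<in>M. \<forall>y\<in>M. norm (x - m) \<le> norm (x - y)"
proof -
  define d where "d = Inf ((\<lambda>m. (norm (x - m))\<^sup>2) ` M)"
  have bdd: "bdd_below ((\<lambda>m. (norm (x - m))\<^sup>2) ` M)"
    by (rule bdd_belowI[of _ 0]) auto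
  have d_le: "d \<le> (norm (x - y))\<^sup>2" if "y \<in> M" for y
    unfolding d_def using bdd that by (auto intro: cInf_lower)
  have "\<exists>m\<in>M. (norm (x - m))\<^sup>2 < d + inverse (Suc n)" for n
    using cInf_lessD[of "(\<lambda>m. (norm (x - m))\<^sup>2) ` M" "d + inverse (Suc n)"] \<open>M \<noteq> {}\<close>
    by (auto simp: d_def)
  then obtain f where f_in: "\<And>n. f n \<in> M"
    and f_near: "\<And>n. (norm (x - f n))\<^sup>2 < d + inverse (Suc n)"
    by metis
  have "Cauchy f"
    using \<open>convex M\<close> f_in d_le f_near by (rule convex_minimizing_sequence_Cauchy)
  then obtain m where lim: "f \<longlonglongrightarrow> m"
    using Cauchy_convergent_iff convergent_def by blast
  have "m \<in> M" using closed_sequentially[OF \<open>closed M\<close>] f_in lim by blast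
  have "(norm (x - m))\<^sup>2 \<le> d"
  proof (rule LIMSEQ_le)
    show "(\<lambda>n. (norm (x - f n))\<^sup>2) \<longlonglongrightarrow> (norm (x - m))\<^sup>2"
      by (intro tendsto_intros lim)
    show "(\<lambda>n. d + inverse (Suc n)) \<longlonglongrightarrow> d"
      using tendsto_add[OF tendsto_const LIMSEQ_inverse_real_of_nat] by simp
    show "\<exists>N. \<forall>n\<ge>N. (norm (x - f n))\<^sup>2 \<le> d + inverse (Suc n)"
      using f_near less_imp_le by blast
  qed
  then have "norm (x - m) \<le> norm (x - y)" if "y \<in> M" for y
    using d_le[OF that] by (simp add: power2_le_imp_le)
  with \<open>m \<in> M\<close> show ?thesis by blast
qed

lemma nearest_point_subspace_orthogonal:
  fixes M :: "'a::real_inner set"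
  assumes "subspace M" "m \<in> M" "y \<in> M"
    and nearest: "\<And>y. y \<in> M \<Longrightarrow> norm (x - m) \<le> norm (x - y)"
  shows "(x - m) \<bullet> y = 0"
proof -
  have "0 \<le> (y \<bullet> y) * t\<^sup>2 + 2 * (- ((x - m) \<bullet> y)) * t + 0" for t
  proof -
    have "m + t *\<^sub>R y \<in> M"
      using assms(1-3) by (simp add: subspace_add subspace_scale)
    then have "(norm (x - m))\<^sup>2 \<le> (norm ((x - m) - t *\<^sub>R y))\<^sup>2"
      using nearest by (simp add: diff_diff_eq power_mono)
    then show ?thesis
      unfolding power2_norm_eq_inner
      by (simp add: inner_diff inner_add inner_commute power2_eq_square algebra_simps)
  qed
  then have "((x - m) \<bullet> y)\<^sup>2 \<le> 0"
    using quadratic_nonneg_imp_discrim_le by fastforce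
  then show ?thesis by simp
qed

lemma orthogonal_projection_exists:
  fixes M :: "'a::{real_inner,complete_space} set"
  assumes "subspace M" "closed M"
  shows "\<exists>m\<in>M. \<forall>y\<in>M. (x - m) \<bullet> y = 0"
proof -
  have "M \<noteq> {}" using subspace_0[OF \<open>subspace M\<close>] by blast
  then obtain m where "m \<in> M" "\<And>y. y \<in> M \<Longrightarrow> norm (x - m) \<le> norm (x - y)"
    using closed_convex_nearest_point_exists assms subspace_imp_convex by metis
  then show ?thesis using nearest_point_subspace_orthogonal[OF \<open>subspace M\<close>] by blast
qed

lemma riesz_representation:
  fixes f :: "'a::{real_inner,complete_space} \<Rightarrow> real"
  assumes "bounded_linear f"
  shows "\<exists>z. \<forall>x. f x = x \<bullet> z"
proof (cases "\<forall>x. f x = 0")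
  case True
  then show ?thesis by (intro exI[of _ 0]) simp
next
  case False
  interpret bounded_linear f by fact
  have "subspace {x. f x = 0}"
    by (simp add: subspace_def add scaleR)
  moreover have "closed {x. f x = 0}"
    by (intro closed_Collect_eq continuous_on_const continuous_on continuous_on_id)
  moreover obtain x0 where "f x0 \<noteq> 0" using False by blast
  ultimately obtain m where "f m = 0" and m: "\<And>y. f y = 0 \<Longrightarrow> (x0 - m) \<bullet> y = 0"
    using orthogonal_projection_exists by blast
  define w where "w = x0 - m"
  have w: "\<And>y. f y = 0 \<Longrightarrow> w \<bullet> y = 0" and "f w \<noteq> 0"
    using m \<open>f m = 0\<close> \<open>f x0 \<noteq> 0\<close> by (simp_all add: w_def diff)
  show ?thesis
  proof (intro exI allI)
    fix x
    have "f (x - (f x / f w) *\<^sub>R w) = 0" using \<open>f w \<noteq> 0\<close> by (simp add: diff scaleR)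
    then have "w \<bullet> (x - (f x / f w) *\<^sub>R w) = 0" by (rule w)
    then have "w \<bullet> x = (f x / f w) * (w \<bullet> w)" by (simp add: inner_diff)
    moreover have "w \<bullet> w \<noteq> 0" using \<open>f w \<noteq> 0\<close> zero by force
    ultimately show "f x = x \<bullet> ((f w / (w \<bullet> w)) *\<^sub>R w)"
      using \<open>f w \<noteq> 0\<close> by (simp add: inner_commute field_simps)
  qed
qed

lemma real_adjoint_exists:
  fixes T :: "'a::{real_inner,complete_space} \<Rightarrow> 'a"
  assumes "bounded_linear T"
  obtains T' where "\<And>x y. T x \<bullet> y = x \<bullet> T' y"
proof -
  have "\<exists>z. \<forall>x. T x \<bullet> y = x \<bullet> z" for y
    using riesz_representation bounded_linear_compose[OF bounded_linear_inner_left assms]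
    by blast
  then show ?thesis using that by metis
qed

section \<open>Positive semidefinite forms\<close>

lemma psd_form_cauchy_schwarz:
  fixes A :: "'a::real_inner \<Rightarrow> 'a"
  assumes "linear A" and sym: "\<And>x y. A x \<bullet> y = x \<bullet> A y" and nonneg: "\<And>x. 0 \<le> A x \<bullet> x"
  shows "(A u \<bullet> v)\<^sup>2 \<le> (A u \<bullet> u) * (A v \<bullet> v)"
proof -
  interpret linear A by fact
  have "0 \<le> (A v \<bullet> v) * t\<^sup>2 + 2 * (A u \<bullet> v) * t + A u \<bullet> u" for t
    using nonneg[of "u + t *\<^sub>R v"] sym[of v u]
    by (simp add: add scale inner_add inner_commute power2_eq_square algebra_simps)
  from quadratic_nonneg_imp_discrim_le[OF this] show ?thesis
    by (simp add: mult.commute)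
qed

lemma psd_form_add_le:
  fixes A :: "'a::real_inner \<Rightarrow> 'a"
  assumes "linear A" and sym: "\<And>x y. A x \<bullet> y = x \<bullet> A y" and nonneg: "\<And>x. 0 \<le> A x \<bullet> x"
  shows "A (u + v) \<bullet> (u + v) \<le> 2 * (A u \<bullet> u) + 2 * (A v \<bullet> v)"
proof -
  interpret linear A by fact
  show ?thesis
    using nonneg[of "u - v"] sym[of u v] sym[of v u]
    by (simp add: add diff inner_add inner_diff inner_commute)
qed

lemma le_if_pow2_bounded:
  fixes r s B :: real
  assumes "0 \<le> s" and bound: "\<And>n. r ^ (2 ^ n) \<le> B * s ^ (2 ^ n)"
  shows "r \<le> s"
proof (rule ccontr)
  assume "\<not> r \<le> s"
  show False
  proof (cases "s = 0")
    case True
    then show False using bound[of 0] \<open>\<not> r \<le> s\<close> by simp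
  next
    case False
    with \<open>0 \<le> s\<close> \<open>\<not> r \<le> s\<close> have "0 < s" "1 < r / s" by simp_all
    then obtain n where "B < (r / s) ^ n" using real_arch_pow by blast
    also have "\<dots> \<le> (r / s) ^ (2 ^ n)"
      using \<open>1 < r / s\<close> by (intro power_increasing) (simp_all add: less_exp less_imp_le)
    also have "\<dots> \<le> B"
      using bound[of n] \<open>0 < s\<close> by (simp add: power_divide divide_le_eq)
    finally show False by simp
  qed
qed

lemma norm_funpow_le:
  fixes C :: "'a::real_normed_vector \<Rightarrow> 'a"
  assumes "0 \<le> K" and C_bound: "\<And>x. norm (C x) \<le> norm x * K"
  shows "norm ((C ^^ k) x) \<le> K ^ k * norm x"
proof (induction k)
  case (Suc k)
  have "norm ((C ^^ Suc k) x) \<le> norm ((C ^^ k) x) * K" using C_bound by simp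
  also have "\<dots> \<le> K ^ k * norm x * K" using Suc \<open>0 \<le> K\<close> by (rule mult_right_mono)
  finally show ?case by (simp add: mult_ac)
qed simp

lemma A_selfadjoint_form_pow2_le:
  fixes A C :: "'a::real_inner \<Rightarrow> 'a"
  assumes "linear A" and sym: "\<And>x y. A x \<bullet> y = x \<bullet> A y" and nonneg: "\<And>x. 0 \<le> A x \<bullet> x"
    and C_sym: "\<And>x y. A (C x) \<bullet> y = A x \<bullet> C y" and z: "A z \<bullet> z = 1"
  shows "(A (C z) \<bullet> C z) ^ (2 ^ n) \<le> A ((C ^^ (2 ^ n)) z) \<bullet> (C ^^ (2 ^ n)) z"
proof (induction n)
  case (Suc n)
  have C_pow_sym: "A ((C ^^ k) x) \<bullet> y = A x \<bullet> (C ^^ k) y" for k x y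
    by (induction k arbitrary: x y) (simp_all add: C_sym funpow_swap1)
  let ?w = "(C ^^ (2 ^ n)) z"
  have "A ?w \<bullet> ?w = A ((C ^^ (2 ^ Suc n)) z) \<bullet> z"
    by (simp add: C_pow_sym[symmetric] mult_2 funpow_add)
  then have "(A ?w \<bullet> ?w)\<^sup>2 \<le> A ((C ^^ (2 ^ Suc n)) z) \<bullet> (C ^^ (2 ^ Suc n)) z"
    using psd_form_cauchy_schwarz[OF assms(1-3), of "(C ^^ (2 ^ Suc n)) z" z] z by simp
  moreover have "((A (C z) \<bullet> C z) ^ (2 ^ n))\<^sup>2 \<le> (A ?w \<bullet> ?w)\<^sup>2"
    using Suc nonneg by (simp add: power_mono)
  ultimately show ?case by (simp add: power_mult[symmetric] mult.commute)
qed simp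

text \<open>With no square root of A at hand, the A-form of C is compared with the norm of C
  through the powers C^(2^n): by the previous lemma
  <Cz, Cz>_A^(2^n) <= <C^(2^n) z, C^(2^n) z>_A <= ||A|| ||C||^(2^(n+1)) ||z||^2.\<close>

lemma A_selfadjoint_form_le_norm_bound:
  fixes A C :: "'a::real_inner \<Rightarrow> 'a"
  assumes "bounded_linear A" and sym: "\<And>x y. A x \<bullet> y = x \<bullet> A y" and nonneg: "\<And>x. 0 \<le> A x \<bullet> x"
    and C_sym: "\<And>x y. A (C x) \<bullet> y = A x \<bullet> C y" and C_bound: "\<And>x. norm (C x) \<le> norm x * K"
    and z: "A z \<bullet> z = 1"
  shows "A (C z) \<bullet> z \<le> K"
proof -
  interpret A: bounded_linear A by fact
  obtain KA where "0 < KA" and KA: "\<And>x. norm (A x) \<le> norm x * KA"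
    using A.pos_bounded by blast
  have "z \<noteq> 0" using z by auto
  moreover have "0 \<le> norm z * K" using C_bound[of z] norm_ge_zero order_trans by blast
  ultimately have "0 \<le> K" by (simp add: zero_le_mult_iff)
  have pow_bound: "A ((C ^^ (2 ^ n)) z) \<bullet> (C ^^ (2 ^ n)) z \<le> KA * (norm z)\<^sup>2 * (K\<^sup>2) ^ (2 ^ n)"
    for n
  proof -
    define w where "w = (C ^^ (2 ^ n)) z"
    have "A w \<bullet> w \<le> norm w * KA * norm w"
      using norm_cauchy_schwarz[of "A w" w] mult_right_mono[OF KA[of w] norm_ge_zero[of w]]
      by linarith
    also have "\<dots> = KA * (norm w)\<^sup>2" by (simp add: power2_eq_square)
    also have "\<dots> \<le> KA * (K ^ (2 ^ n) * norm z)\<^sup>2"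
      unfolding w_def using \<open>0 < KA\<close> \<open>0 \<le> K\<close>
      by (intro mult_left_mono power_mono norm_funpow_le C_bound) auto
    also have "\<dots> = KA * (norm z)\<^sup>2 * (K\<^sup>2) ^ (2 ^ n)"
    proof -
      have "(K ^ (2 ^ n))\<^sup>2 = (K\<^sup>2) ^ (2 ^ n)" by (metis power_mult mult.commute)
      then show ?thesis by (simp add: power_mult_distrib mult_ac)
    qed
    finally show ?thesis by (simp add: w_def)
  qed
  have "(A (C z) \<bullet> C z) ^ (2 ^ n) \<le> KA * (norm z)\<^sup>2 * (K\<^sup>2) ^ (2 ^ n)" for n
    using A_selfadjoint_form_pow2_le[OF A.linear sym nonneg C_sym z] pow_bound by (rule order_trans)
  then have "A (C z) \<bullet> C z \<le> K\<^sup>2"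
    by (rule le_if_pow2_bounded[rotated]) simp
  moreover have "(A (C z) \<bullet> z)\<^sup>2 \<le> A (C z) \<bullet> C z"
    using psd_form_cauchy_schwarz[OF A.linear sym nonneg, of "C z" z] z by simp
  ultimately have "(A (C z) \<bullet> z)\<^sup>2 \<le> K\<^sup>2" by linarith
  then show ?thesis using \<open>0 \<le> K\<close> by (rule power2_le_imp_le)
qed

lemma A_adjoint_imp_A_bounded:
  fixes A S R :: "'a::real_inner \<Rightarrow> 'a"
  assumes "bounded_linear A" and sym: "\<And>x y. A x \<bullet> y = x \<bullet> A y" and nonneg: "\<And>x. 0 \<le> A x \<bullet> x"
    and "bounded_linear S" "bounded_linear R" and adj: "\<And>x y. A (R x) \<bullet> y = A x \<bullet> S y"
  obtains c where "\<And>z. A z \<bullet> z = 1 \<Longrightarrow> A (S z) \<bullet> S z \<le> c"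
proof -
  define C where "C x = R (S x)" for x
  have "bounded_linear C"
    unfolding C_def using assms(5,4) by (rule bounded_linear_compose)
  then obtain K where K: "\<And>x. norm (C x) \<le> norm x * K"
    using bounded_linear.bounded by blast
  have C_form: "A (C x) \<bullet> y = A (S x) \<bullet> S y" for x y
    by (simp add: C_def adj)
  have "A (C x) \<bullet> y = A x \<bullet> C y" for x y
  proof -
    have "A (C x) \<bullet> y = S x \<bullet> A (S y)" unfolding C_form by (rule sym)
    also have "\<dots> = A (C y) \<bullet> x" unfolding C_form by (rule inner_commute)
    also have "\<dots> = A x \<bullet> C y" by (metis sym inner_commute)
    finally show ?thesis .
  qed
  then have "A (S z) \<bullet> S z \<le> K" if "A z \<bullet> z = 1" for z
    using A_selfadjoint_form_le_norm_bound[OF assms(1) sym nonneg _ K that] C_form by simp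
  then show ?thesis using that by blast
qed

section \<open>The A-semi-inner product on a complex Hilbert space\<close>

lemma Re_cinner [simp]: "Re (cinner J x y) = x \<bullet> y"
  by (simp add: cinner_def)

lemma Im_cinner [simp]: "Im (cinner J x y) = x \<bullet> J y"
  by (simp add: cinner_def)

lemma cinner_eq_0_iff: "cinner J x y = 0 \<longleftrightarrow> x \<bullet> y = 0 \<and> x \<bullet> J y = 0"
  by (simp add: complex_eq_iff)

lemma anorm_eq_sqrt: "anorm J A z = sqrt (A z \<bullet> z)"
  by (simp add: anorm_def ainner_def)

lemma complex_structureD:
  assumes "complex_structure J"
  shows "bounded_linear J" "J (J x) = - x" "J x \<bullet> J y = x \<bullet> y" "J x \<bullet> y = - (x \<bullet> J y)"
proof -
  show J: "bounded_linear J" "J (J x) = - x" "J x \<bullet> J y = x \<bullet> y" for x y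
    using assms by (auto simp: complex_structure_def)
  have "J x \<bullet> y = - (J x \<bullet> J (J y))" by (simp add: J(2))
  also have "\<dots> = - (x \<bullet> J y)" by (simp add: J(3))
  finally show "J x \<bullet> y = - (x \<bullet> J y)" .
qed

lemma cpositiveD:
  assumes J: "complex_structure J" and "cpositive J A"
  shows "bounded_linear A" "A (J x) = J (A x)" "0 \<le> A x \<bullet> x" "A x \<bullet> J x = 0"
    and "A x \<bullet> y = x \<bullet> A y"
proof -
  show A: "bounded_linear A" "A (J x) = J (A x)" "0 \<le> A x \<bullet> x" "A x \<bullet> J x = 0" for x
    using assms(2) by (auto simp: cpositive_def cbounded_def)
  interpret A: bounded_linear A by fact
  interpret J: bounded_linear J using complex_structureD(1)[OF J] .
  have "A (x + J y) \<bullet> J (x + J y) = 0" by (rule A(4))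
  then have "A x \<bullet> J (J y) + A (J y) \<bullet> J x = 0"
    using A(4)[of x] A(4)[of "J y"] by (simp add: A.add J.add inner_add)
  then have "- (A x \<bullet> y) + J (A y) \<bullet> J x = 0"
    by (simp add: A(2) complex_structureD(2)[OF J])
  then show "A x \<bullet> y = x \<bullet> A y"
    by (simp add: complex_structureD(3)[OF J] inner_commute)
qed

lemma cadj_adjoint:
  fixes J S :: "'a::{real_inner,complete_space} \<Rightarrow> 'a"
  assumes J: "complex_structure J" and "cbounded J S"
  shows "S x \<bullet> y = x \<bullet> cadj J S y"
proof -
  have S: "bounded_linear S" "\<And>x. S (J x) = J (S x)"
    using assms(2) by (auto simp: cbounded_def)
  obtain T where T: "\<And>x y. S x \<bullet> y = x \<bullet> T y"
    using real_adjoint_exists[OF S(1)] by blast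
  note J_left = complex_structureD(4)[OF J]
  have "cadj J S y = T y"
    unfolding cadj_def
  proof (rule the_equality)
    have "S x \<bullet> J y = x \<bullet> J (T y)" for x
    proof -
      have "S x \<bullet> J y = - (J (S x) \<bullet> y)" by (simp add: J_left)
      also have "\<dots> = - (J x \<bullet> T y)" by (simp flip: S(2) add: T)
      also have "\<dots> = x \<bullet> J (T y)" by (simp add: J_left)
      finally show ?thesis .
    qed
    then show "\<forall>x. cinner J (S x) y = cinner J x (T y)"
      by (simp add: complex_eq_iff T)
  next
    fix z assume "\<forall>x. cinner J (S x) y = cinner J x z"
    then have "x \<bullet> z = x \<bullet> T y" for x
      using T by (metis Re_cinner)
    from this[of "z - T y"] have "(z - T y) \<bullet> (z - T y) = 0"
      by (simp add: inner_diff_right)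
    then show "z = T y" by simp
  qed
  then show ?thesis using T by simp
qed

lemma A_mp_inv_range:
  fixes A J :: "'a::{real_inner,complete_space} \<Rightarrow> 'a"
  assumes "bounded_linear A" "linear J" and AJ: "\<And>x. A (J x) = J (A x)"
  shows "A (mp_inv J A (A v)) = A v"
proof -
  interpret A: bounded_linear A by fact
  interpret J: linear J by fact
  have "subspace {x. A x = 0}"
    by (simp add: subspace_def A.add A.scaleR)
  moreover have "closed {x. A x = 0}"
    by (intro closed_Collect_eq continuous_on_const A.continuous_on continuous_on_id)
  ultimately obtain m where "A m = 0" and m: "\<And>y. A y = 0 \<Longrightarrow> (v - m) \<bullet> y = 0"
    using orthogonal_projection_exists by blast
  \<comment> \<open>mp_inv J A (A v) is the component v - m of v orthogonal to the kernel of A.\<close>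
  define P where "P = (\<lambda>x. (\<forall>z. A z = 0 \<longrightarrow> cinner J x z = 0)
                        \<and> (\<forall>z. cinner J (A v - A x) (A z) = 0))"
  have "P (v - m)"
    using m \<open>A m = 0\<close> by (simp add: P_def cinner_eq_0_iff A.diff AJ J.zero)
  moreover have "x = v - m" if "P x" for x
  proof -
    have "(A v - A x) \<bullet> A (v - m - x) = 0"
      using that by (simp add: P_def cinner_eq_0_iff)
    then have "A (v - m - x) = 0"
      using \<open>A m = 0\<close> by (simp add: A.diff)
    then have "x \<bullet> (v - m - x) = 0" "(v - m) \<bullet> (v - m - x) = 0"
      using that \<open>P (v - m)\<close> by (simp_all add: P_def cinner_eq_0_iff)
    then have "(v - m - x) \<bullet> (v - m - x) = 0"
      by (simp add: inner_diff_left)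
    then show ?thesis by simp
  qed
  ultimately have "mp_inv J A (A v) = v - m"
    unfolding mp_inv_def P_def[symmetric] by (rule the_equality)
  then show ?thesis using \<open>A m = 0\<close> by (simp add: A.diff)
qed

lemma BA_A_adjoint:
  fixes J A S :: "'a::{real_inner,complete_space} \<Rightarrow> 'a"
  assumes J: "complex_structure J" and A: "cpositive J A" and "S \<in> BA J A"
  obtains R where "bounded_linear R" "\<And>z. A (sharpA J A S z) = A (R z)"
    "\<And>x y. A (R x) \<bullet> y = A x \<bullet> S y"
proof -
  obtain R where "cbounded J R" "cbounded J S" and R: "\<And>x. A (R x) = cadj J S (A x)"
    using assms(3) by (auto simp: BA_def)
  have "A (sharpA J A S z) = A (R z)" for z
    using A_mp_inv_range[of A J "R z"] cpositiveD(1,2)[OF J A] complex_structureD(1)[OF J] R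
    by (simp add: sharpA_def bounded_linear.linear)
  moreover have "A (R x) \<bullet> y = A x \<bullet> S y" for x y
    using R cadj_adjoint[OF J \<open>cbounded J S\<close>] by (simp add: inner_commute)
  moreover have "bounded_linear R" using \<open>cbounded J R\<close> by (simp add: cbounded_def)
  ultimately show ?thesis using that by blast
qed

lemma sharpA_A_adjoint:
  fixes J A S :: "'a::{real_inner,complete_space} \<Rightarrow> 'a"
  assumes "complex_structure J" "cpositive J A" "S \<in> BA J A"
  shows "A (sharpA J A S x) \<bullet> y = A x \<bullet> S y"
  using BA_A_adjoint[OF assms] by metis

lemma BA_A_bounded:
  fixes J A S :: "'a::{real_inner,complete_space} \<Rightarrow> 'a"
  assumes J: "complex_structure J" and A: "cpositive J A" and "S \<in> BA J A"
  obtains c where "\<And>z. A z \<bullet> z = 1 \<Longrightarrow> A (S z) \<bullet> S z \<le> c"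
    and "\<And>z. A z \<bullet> z = 1 \<Longrightarrow> A (sharpA J A S z) \<bullet> sharpA J A S z \<le> c"
proof -
  note A_props = cpositiveD[OF J A]
  obtain R where "bounded_linear R" and sharp: "\<And>z. A (sharpA J A S z) = A (R z)"
    and adj: "\<And>x y. A (R x) \<bullet> y = A x \<bullet> S y"
    using BA_A_adjoint[OF assms] by blast
  have "bounded_linear S" using assms(3) by (simp add: BA_def cbounded_def)
  obtain cS where cS: "\<And>z. A z \<bullet> z = 1 \<Longrightarrow> A (S z) \<bullet> S z \<le> cS"
    using A_adjoint_imp_A_bounded[OF A_props(1,5,3) \<open>bounded_linear S\<close> \<open>bounded_linear R\<close> adj]
    by blast
  have "A (S x) \<bullet> y = A x \<bullet> R y" for x y
    using adj A_props(5) by (metis inner_commute)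
  then obtain cR where cR: "\<And>z. A z \<bullet> z = 1 \<Longrightarrow> A (R z) \<bullet> R z \<le> cR"
    using A_adjoint_imp_A_bounded[OF A_props(1,5,3) \<open>bounded_linear R\<close> \<open>bounded_linear S\<close>]
    by blast
  have "A (sharpA J A S z) \<bullet> sharpA J A S z = A (R z) \<bullet> R z" for z
    by (metis sharp A_props(5) inner_commute)
  then show ?thesis
    using that[of "max cS cR"] cS cR by fastforce
qed

lemma BA_anorm_bounded:
  fixes J A S :: "'a::{real_inner,complete_space} \<Rightarrow> 'a"
  assumes J: "complex_structure J" and A: "cpositive J A" and "S \<in> BA J A"
  obtains c where "\<And>z. anorm J A z = 1 \<Longrightarrow> anorm J A (S z) \<le> c"
    and "\<And>z. anorm J A z = 1 \<Longrightarrow> anorm J A (ReA J A S z) \<le> c"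
proof -
  note A_props = cpositiveD[OF J A]
  interpret A: bounded_linear A by (fact A_props(1))
  obtain c where cS: "\<And>z. A z \<bullet> z = 1 \<Longrightarrow> A (S z) \<bullet> S z \<le> c"
    and c_sharp: "\<And>z. A z \<bullet> z = 1 \<Longrightarrow> A (sharpA J A S z) \<bullet> sharpA J A S z \<le> c"
    using BA_A_bounded[OF assms] by blast
  show ?thesis
  proof (rule that)
    fix z assume "anorm J A z = 1"
    then have z: "A z \<bullet> z = 1" by (simp add: anorm_eq_sqrt)
    show "anorm J A (S z) \<le> sqrt c"
      using cS[OF z] by (simp add: anorm_eq_sqrt)
    have "A (ReA J A S z) \<bullet> ReA J A S z = (A (S z + sharpA J A S z) \<bullet> (S z + sharpA J A S z)) / 4"
      by (simp add: ReA_def A.scaleR)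
    also have "\<dots> \<le> c"
      using psd_form_add_le[OF A.linear A_props(5,3), of "S z" "sharpA J A S z"]
        cS[OF z] c_sharp[OF z]
      by simp
    finally show "anorm J A (ReA J A S z) \<le> sqrt c"
      by (simp add: anorm_eq_sqrt)
  qed
qed

lemma cmod_ainner_le:
  fixes J A :: "'a::real_inner \<Rightarrow> 'a"
  assumes J: "complex_structure J" and A: "cpositive J A"
  shows "cmod (ainner J A x z) \<le> anorm J A x * anorm J A z"
proof -
  note A_props = cpositiveD[OF J A]
  interpret A: bounded_linear A by (fact A_props(1))
  define a where "a = A x \<bullet> z"
  define b where "b = A x \<bullet> J z"
  \<comment> \<open>Real Cauchy-Schwarz against w, for which <x, w>_A = a^2 + b^2 = |<x, z>_A|^2
    and ||w||_A^2 = (a^2 + b^2) ||z||_A^2.\<close>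
  define w where "w = a *\<^sub>R z + b *\<^sub>R J z"
  have "A x \<bullet> w = a\<^sup>2 + b\<^sup>2"
    by (simp add: w_def a_def b_def power2_eq_square inner_add_right)
  moreover have "A w \<bullet> w = (a\<^sup>2 + b\<^sup>2) * (A z \<bullet> z)"
  proof -
    have "A (J z) \<bullet> z = 0" using A_props(4,5) by (metis inner_commute)
    moreover have "A (J z) \<bullet> J z = A z \<bullet> z"
      by (simp add: A_props(2) complex_structureD(3)[OF J])
    ultimately show ?thesis using A_props(4)[of z]
      by (simp add: w_def A.add A.scaleR inner_add power2_eq_square algebra_simps)
  qed
  ultimately have cs: "(a\<^sup>2 + b\<^sup>2)\<^sup>2 \<le> (A x \<bullet> x) * ((a\<^sup>2 + b\<^sup>2) * (A z \<bullet> z))"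
    using psd_form_cauchy_schwarz[OF A.linear A_props(5,3), of x w] by simp
  have "a\<^sup>2 + b\<^sup>2 \<le> (A x \<bullet> x) * (A z \<bullet> z)"
  proof (cases "a\<^sup>2 + b\<^sup>2 = 0")
    case True
    then show ?thesis using A_props(3)[of x] A_props(3)[of z] by simp
  next
    case False
    then have "0 < a\<^sup>2 + b\<^sup>2" by (simp add: add_nonneg_nonneg order_less_le)
    with cs show ?thesis
      by (simp add: power2_eq_square[of "a\<^sup>2 + b\<^sup>2"] mult.left_commute)
  qed
  then show ?thesis
    by (simp add: cmod_def ainner_def anorm_eq_sqrt a_def b_def real_sqrt_mult[symmetric])
qed

lemma anorm_nonneg: "cpositive J A \<Longrightarrow> 0 \<le> anorm J A z"
  by (simp add: anorm_def ainner_def cpositive_def)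

lemma le_Sup_insert_0:
  fixes f :: "'b \<Rightarrow> real"
  assumes "\<And>z. z \<in> Z \<Longrightarrow> f z \<le> c" "x \<in> insert 0 (f ` Z)"
  shows "x \<le> Sup (insert 0 (f ` Z))"
proof (rule cSup_upper)
  show "bdd_above (insert 0 (f ` Z))"
    using assms(1) by (intro bdd_aboveI[of _ "max 0 c"]) force
qed (fact assms(2))

lemma opnormA_ge:
  assumes "\<And>z. anorm J A z = 1 \<Longrightarrow> anorm J A (T z) \<le> c"
  shows "anorm J A z = 1 \<Longrightarrow> anorm J A (T z) \<le> opnormA J A T" and "0 \<le> opnormA J A T"
  unfolding opnormA_def using assms by (auto intro!: le_Sup_insert_0[where c = c])

lemma domegaA_ge:
  fixes J A T :: "'a::real_inner \<Rightarrow> 'a"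
  assumes J: "complex_structure J" and A: "cpositive J A"
    and bound: "\<And>z. anorm J A z = 1 \<Longrightarrow> anorm J A (T z) \<le> c" and z: "anorm J A z = 1"
  shows "(cmod (ainner J A (T z) z))\<^sup>2 + anorm J A (T z) ^ 4 \<le> (domegaA J A T)\<^sup>2"
proof -
  define f where "f z = sqrt ((cmod (ainner J A (T z) z))\<^sup>2 + anorm J A (T z) ^ 4)" for z
  have "f y \<le> sqrt (c\<^sup>2 + c ^ 4)" if "anorm J A y = 1" for y
  proof -
    have "cmod (ainner J A (T y) y) \<le> c"
      using cmod_ainner_le[OF J A, of "T y" y] bound[OF that] that by simp
    moreover have "0 \<le> anorm J A (T y)" by (rule anorm_nonneg[OF A])
    ultimately show ?thesis
      unfolding f_def using bound[OF that]
      by (intro real_sqrt_le_mono add_mono power_mono) auto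
  qed
  then have "f z \<le> domegaA J A T"
    unfolding domegaA_def f_def[symmetric] using z by (auto intro!: le_Sup_insert_0)
  then have "(f z)\<^sup>2 \<le> (domegaA J A T)\<^sup>2"
    by (rule power_mono) (simp add: f_def)
  then show ?thesis by (simp add: f_def)
qed

lemma omegaA_sq_le:
  assumes "0 \<le> c" "\<And>z. anorm J A z = 1 \<Longrightarrow> (cmod (ainner J A (T z) z))\<^sup>2 \<le> c"
  shows "(omegaA J A T)\<^sup>2 \<le> c"
proof -
  have "omegaA J A T \<le> sqrt c"
    unfolding omegaA_def using assms by (intro cSup_least) (auto intro: real_le_rsqrt)
  moreover have "0 \<le> omegaA J A T"
    unfolding omegaA_def using assms
    by (auto intro!: le_Sup_insert_0[where c = "sqrt c"] real_le_rsqrt)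
  ultimately show ?thesis
    using power_mono[of "omegaA J A T" "sqrt c" 2] assms(1) by simp
qed

lemma ainner_add_scaleR_left:
  assumes "cpositive J A"
  shows "ainner J A (x + s *\<^sub>R y) z = ainner J A x z + of_real s * ainner J A y z"
proof -
  interpret A: bounded_linear A using assms by (simp add: cpositive_def cbounded_def)
  show ?thesis
    by (simp add: complex_eq_iff ainner_def A.add A.scaleR inner_add_left)
qed

lemma ainner_sharpA_S:
  fixes J A S :: "'a::{real_inner,complete_space} \<Rightarrow> 'a"
  assumes J: "complex_structure J" and A: "cpositive J A" and S: "S \<in> BA J A"
  shows "ainner J A (sharpA J A S (S z)) z = of_real ((anorm J A (S z))\<^sup>2)"
proof -
  have "S (J z) = J (S z)" using S by (simp add: BA_def cbounded_def)
  then show ?thesis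
    using sharpA_A_adjoint[OF assms, of "S z" z] sharpA_A_adjoint[OF assms, of "S z" "J z"]
      cpositiveD(3,4)[OF J A, of "S z"]
    by (simp add: complex_eq_iff ainner_def anorm_eq_sqrt)
qed

lemma Re_ainner_ReA:
  fixes J A S :: "'a::{real_inner,complete_space} \<Rightarrow> 'a"
  assumes J: "complex_structure J" and A: "cpositive J A" and "S \<in> BA J A"
  shows "Re (ainner J A (ReA J A S z) z) = Re (ainner J A (S z) z)"
proof -
  interpret A: bounded_linear A using cpositiveD(1)[OF J A] .
  have "A (sharpA J A S z) \<bullet> z = A (S z) \<bullet> z"
    using sharpA_A_adjoint[OF assms, of z z] cpositiveD(5)[OF J A, of z "S z"]
    by (simp add: inner_commute)
  then show ?thesis
    by (simp add: ReA_def ainner_def A.add A.scaleR inner_add_left)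
qed

lemma cmod_ainner_S_plus_sharpA_S_le:
  fixes J A S :: "'a::{real_inner,complete_space} \<Rightarrow> 'a"
  assumes J: "complex_structure J" and A: "cpositive J A" and "S \<in> BA J A"
    and z: "anorm J A z = 1" and s: "\<bar>s\<bar> = 1"
  shows "(cmod (ainner J A (S z + s *\<^sub>R sharpA J A S (S z)) z))\<^sup>2
    \<le> (cmod (ainner J A (S z) z))\<^sup>2 + anorm J A (S z) ^ 4
       + 2 * (anorm J A (S z))\<^sup>2 * anorm J A (ReA J A S z)"
proof -
  define w where "w = ainner J A (S z) z"
  define b where "b = (anorm J A (S z))\<^sup>2"
  have "s\<^sup>2 = 1" using s by (metis power2_abs power_one)
  have "ainner J A (S z + s *\<^sub>R sharpA J A S (S z)) z = w + of_real (s * b)"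
    by (simp add: ainner_add_scaleR_left[OF A] ainner_sharpA_S[OF assms(1-3)] w_def b_def)
  then have "(cmod (ainner J A (S z + s *\<^sub>R sharpA J A S (S z)) z))\<^sup>2
      = (cmod w)\<^sup>2 + b\<^sup>2 + 2 * b * (s * Re w)"
    using \<open>s\<^sup>2 = 1\<close> by (simp add: cmod_power2 power2_sum power_mult_distrib algebra_simps)
  also have "\<dots> \<le> (cmod w)\<^sup>2 + b\<^sup>2 + 2 * b * anorm J A (ReA J A S z)"
  proof -
    have "s * Re w \<le> \<bar>Re (ainner J A (ReA J A S z) z)\<bar>"
      using s abs_ge_self[of "s * Re w"] Re_ainner_ReA[OF assms(1-3)] by (simp add: w_def abs_mult)
    also have "\<dots> \<le> anorm J A (ReA J A S z)"
      using abs_Re_le_cmod cmod_ainner_le[OF J A, of "ReA J A S z" z] z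
      by (metis mult_1_right order_trans)
    finally show ?thesis by (simp add: b_def mult_left_mono)
  qed
  finally show ?thesis
    by (simp add: w_def b_def power_mult[of _ 2 2, simplified] mult_ac)
qed

theorem theorem2p15:
  fixes J A S :: "'a::{real_inner, complete_space} \<Rightarrow> 'a"
  assumes "complex_structure J"
    and "cpositive J A"
    and "S \<in> BA J A"
  shows "(domegaA J A S)\<^sup>2 + 2 * (opnormA J A S)\<^sup>2 * opnormA J A (ReA J A S)
         \<ge> max ((omegaA J A (\<lambda>z. S z + sharpA J A S (S z)))\<^sup>2)
                ((omegaA J A (\<lambda>z. S z - sharpA J A S (S z)))\<^sup>2)"
proof -
  obtain c where S_bound: "\<And>z. anorm J A z = 1 \<Longrightarrow> anorm J A (S z) \<le> c"
    and ReA_bound: "\<And>z. anorm J A z = 1 \<Longrightarrow> anorm J A (ReA J A S z) \<le> c"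
    using BA_anorm_bounded[OF assms] by blast
  let ?rhs = "(domegaA J A S)\<^sup>2 + 2 * (opnormA J A S)\<^sup>2 * opnormA J A (ReA J A S)"
  have "(omegaA J A (\<lambda>z. S z + s *\<^sub>R sharpA J A S (S z)))\<^sup>2 \<le> ?rhs" if "\<bar>s\<bar> = 1" for s
  proof (rule omegaA_sq_le)
    show "0 \<le> ?rhs"
      using opnormA_ge(2)[OF S_bound] opnormA_ge(2)[OF ReA_bound] by simp
    fix z assume z: "anorm J A z = 1"
    have "(anorm J A (S z))\<^sup>2 * anorm J A (ReA J A S z) \<le> (opnormA J A S)\<^sup>2 * opnormA J A (ReA J A S)"
      using opnormA_ge[OF S_bound] opnormA_ge[OF ReA_bound] z
      by (intro mult_mono power_mono) (auto simp: anorm_nonneg[OF assms(2)])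
    then show "(cmod (ainner J A (S z + s *\<^sub>R sharpA J A S (S z)) z))\<^sup>2 \<le> ?rhs"
      using cmod_ainner_S_plus_sharpA_S_le[OF assms z that]
        domegaA_ge[where T = S, OF assms(1,2) S_bound z]
      by linarith
  qed
  from this[of 1] this[of "-1"] show ?thesis by simp
qed

end
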